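(* Let $E$ be a nonempty closed convex subset of a real Hilbert space $H$. Let $f:E\times E\to\mathbb{R}$ be a bifunction satisfying conditions (A1)–(A4) below, and let $S:E\to E$ be a hybrid mapping with $F(S)\cap EP(f)\neq\emptyset$. Let $\{\alpha_n\}$ satisfy $0<\alpha\le\alpha_n\le 1$ for all $n$ (for some constant $\alpha>0$), let $\{r_n\}\subset(0,\infty)$ satisfy $\liminf_{n\to\infty}r_n>0$, and let $\{\beta_n\}$ be a sequence in $[b,1]$ for some $b\in(0,1)$ with $\liminf_{n\to\infty}\beta_n(1-\beta_n)>0$. Let $\{x_n\}$ and $\{u_n\}$ be generated by $x_1=x\in E$ and, for all $n\in\mathbb{N}$, $$u_n\in E \text{ such that } f(u_n,y)+\frac{1}{r_n}\langle y-u_n,u_n-x_n\rangle\ge 0\quad\text{for all } y\in E,$$ $$y_n=(1-\beta_n)x_n+\beta_n Su_n,\qquad x_{n+1}=(1-\alpha_n)x_n+\alpha_n Sy_n.$$ Then $\{x_n\}$ converges weakly to a point $v\in F(S)\cap EP(f)$, where $v=\lim_{n\to\infty}P_{F(S)\cap EP(f)}(x_n)$.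
   Context: $F(S)=\{x\in E: Sx=x\}$. A mapping $S:E\to E$ is hybrid if $3\|Sx-Sy\|^2\le \|x-y\|^2+\|Sx-y\|^2+\|Sy-x\|^2$ for all $x,y\in E$. $EP(f)=\{x\in E: f(x,y)\ge 0 \text{ for all } y\in E\}$. Conditions: (A1) $f(x,x)=0$ for all $x\in E$; (A2) $f(x,y)+f(y,x)\le 0$ for all $x,y\in E$; (A3) for all $x,y,z\in E$, $\lim_{t\downarrow 0} f(tz+(1-t)x,y)\le f(x,y)$; (A4) for each $x\in E$, $y\mapsto f(x,y)$ is convex and lower semicontinuous. $P_K$ is the metric projection of $H$ onto a nonempty closed convex set $K$; the limit defining $v$ is in norm. *)

theory Defs
  imports "HOL-Analysis.Analysis"
begin

definition fixset :: "'a set \<Rightarrow> ('a \<Rightarrow> 'a) \<Rightarrow> 'a set" where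
  "fixset E S = {x \<in> E. S x = x}"

definition EP :: "'a set \<Rightarrow> ('a \<Rightarrow> 'a \<Rightarrow> real) \<Rightarrow> 'a set" where
  "EP E f = {x \<in> E. \<forall>y\<in>E. f x y \<ge> 0}"

definition hybrid :: "'a::real_inner set \<Rightarrow> ('a \<Rightarrow> 'a) \<Rightarrow> bool" where
  "hybrid E S \<longleftrightarrow> S ` E \<subseteq> E \<and>
     (\<forall>x\<in>E. \<forall>y\<in>E. 3 * (norm (S x - S y))\<^sup>2 \<le>
        (norm (x - y))\<^sup>2 + (norm (S x - y))\<^sup>2 + (norm (S y - x))\<^sup>2)"

definition lsc_on :: "'a::topological_space set \<Rightarrow> ('a \<Rightarrow> real) \<Rightarrow> bool" where
  "lsc_on E g \<longleftrightarrow> (\<forall>x\<in>E. \<forall>a. a < g x \<longrightarrow> (\<forall>\<^sub>F y in at x within E. a < g y))"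

definition bifun_conds :: "'a::real_inner set \<Rightarrow> ('a \<Rightarrow> 'a \<Rightarrow> real) \<Rightarrow> bool" where
  "bifun_conds E f \<longleftrightarrow>
     (\<forall>x\<in>E. f x x = 0) \<and>
     (\<forall>x\<in>E. \<forall>y\<in>E. f x y + f y x \<le> 0) \<and>
     (\<forall>x\<in>E. \<forall>y\<in>E. \<forall>z\<in>E.
        Limsup (at_right 0) (\<lambda>t. ereal (f (t *\<^sub>R z + (1 - t) *\<^sub>R x) y)) \<le> ereal (f x y)) \<and>
     (\<forall>x\<in>E. convex_on E (f x) \<and> lsc_on E (f x))"

definition weakly_conv :: "(nat \<Rightarrow> 'a::real_inner) \<Rightarrow> 'a \<Rightarrow> bool" where
  "weakly_conv x v \<longleftrightarrow> (\<forall>w. ((\<lambda>n. x n \<bullet> w) \<longlongrightarrow> v \<bullet> w) sequentially)"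

text \<open>Metric projection onto K (unique nearest point; K nonempty closed convex).\<close>
definition metric_proj :: "'a::real_normed_vector set \<Rightarrow> 'a \<Rightarrow> 'a" where
  "metric_proj K x = (THE p. p \<in> K \<and> (\<forall>z\<in>K. norm (x - p) \<le> norm (x - z)))"

end

theory Submission
  imports Defs
begin

(* The iterates are Fejer monotone with respect to Sol = F(S) \<inter> EP(f): this gives
   boundedness, convergence of every distance norm (x n - p) with p \<in> Sol, and
   x n - u n \<rightarrow> 0, x n - S (u n) \<rightarrow> 0.  Weak convergence is obtained without weak
   compactness, through asymptotic centers.  The asymptotic center of any subsequence lies in Sol,
   because hybrid maps are demiclosed at 0 and, by Minty's lemma, EP(f) is an intersection of
   closed convex sublevel sets that eventually contain the u n.  Since the distances to points of
   Sol converge, every subsequence then has the same center c as the whole sequence, and this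
   forces (x n - c) \<bullet> w \<rightarrow> 0 for every w.  Finally, the projections of x n onto Sol form a
   Cauchy sequence, and the variational inequality of the projection identifies its limit
   with c. *)

subsection \<open>Hilbert space geometry\<close>

lemma norm_add_square:
  fixes a b :: "'a::real_inner"
  shows "(norm (a + b))\<^sup>2 = (norm a)\<^sup>2 + (norm b)\<^sup>2 + 2 * (a \<bullet> b)"
  by (simp add: power2_norm_eq_inner inner_add_left inner_add_right inner_commute)

lemma norm_midpoint_square:
  fixes s a b :: "'a::real_inner"
  shows "(norm (s - (1/2) *\<^sub>R (a + b)))\<^sup>2 =
           (norm (s - a))\<^sup>2 / 2 + (norm (s - b))\<^sup>2 / 2 - (norm (a - b))\<^sup>2 / 4"
  by (simp add: power2_norm_eq_inner inner_diff_left inner_diff_right inner_add_left inner_add_right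
      inner_commute field_simps)

lemma norm_convex_comb_square:
  fixes a b :: "'a::real_inner"
  shows "(norm ((1 - t) *\<^sub>R a + t *\<^sub>R b))\<^sup>2 =
           (1 - t) * (norm a)\<^sup>2 + t * (norm b)\<^sup>2 - t * (1 - t) * (norm (a - b))\<^sup>2"
proof -
  have 1: "(norm ((1 - t) *\<^sub>R a + t *\<^sub>R b))\<^sup>2 =
             (1 - t)\<^sup>2 * (a \<bullet> a) + t\<^sup>2 * (b \<bullet> b) + 2 * t * (1 - t) * (a \<bullet> b)"
    unfolding power2_norm_eq_inner
    by (simp add: inner_add_left inner_add_right inner_commute power2_eq_square algebra_simps)
  have 2: "(norm (a - b))\<^sup>2 = a \<bullet> a + b \<bullet> b - 2 * (a \<bullet> b)"
    "(norm a)\<^sup>2 = a \<bullet> a" "(norm b)\<^sup>2 = b \<bullet> b"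
    by (simp_all add: power2_norm_eq_inner inner_diff_left inner_diff_right inner_commute)
  show ?thesis
    unfolding 1 2 by (simp add: power2_eq_square algebra_simps)
qed

lemma norm_diff_square_le:
  fixes s a b :: "'a::real_inner"
  shows "(norm (s - a))\<^sup>2 \<le> (norm (s - b))\<^sup>2 + norm (a - b) * (2 * norm s + norm a + norm b)"
proof -
  have "(norm (s - a))\<^sup>2 - (norm (s - b))\<^sup>2 = (b - a) \<bullet> (2 *\<^sub>R s - a - b)"
    by (simp add: power2_norm_eq_inner inner_diff_left inner_diff_right inner_commute algebra_simps)
  also have "\<dots> \<le> norm (b - a) * norm (2 *\<^sub>R s - a - b)"
    by (rule norm_cauchy_schwarz)
  also have "\<dots> \<le> norm (a - b) * (2 * norm s + norm a + norm b)"
  proof -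
    have "norm (2 *\<^sub>R s - a - b) \<le> norm (2 *\<^sub>R s - a) + norm b"
      by (rule norm_triangle_ineq4)
    also have "\<dots> \<le> 2 * norm s + norm a + norm b"
      using norm_triangle_ineq4[of "2 *\<^sub>R s" a] by simp
    finally show ?thesis
      by (simp add: norm_minus_commute mult_left_mono)
  qed
  finally show ?thesis by simp
qed

lemma midpoint_mem_convex:
  assumes "convex K" "a \<in> K" "b \<in> K"
  shows "(1/2) *\<^sub>R (a + b) \<in> K"
  using convexD[OF assms, of "1/2" "1/2"] by (simp add: scaleR_add_right)

lemma nonpos_if_quadratic_bound:
  fixes d n :: real
  assumes "\<And>t. 0 < t \<Longrightarrow> t \<le> 1 \<Longrightarrow> 2 * t * d \<le> t\<^sup>2 * n"
  shows "d \<le> 0"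
proof (rule ccontr)
  assume "\<not> d \<le> 0"
  define t where "t = min 1 (d / (\<bar>n\<bar> + 1))"
  have t: "0 < t" "t \<le> 1" "t * \<bar>n\<bar> < d"
    using \<open>\<not> d \<le> 0\<close> by (auto simp: t_def min_def field_simps)
  have "t * (2 * d) \<le> t\<^sup>2 * n"
    using assms[OF t(1,2)] by (simp add: mult.assoc mult.left_commute)
  also have "\<dots> \<le> t * (t * \<bar>n\<bar>)"
    using mult_left_mono[OF abs_ge_self[of n], of "t\<^sup>2"] by (simp add: power2_eq_square)
  finally have "2 * d \<le> t * \<bar>n\<bar>"
    using t(1) by simp
  then show False
    using t(3) \<open>\<not> d \<le> 0\<close> by linarith
qed

text \<open>A minimizing sequence is Cauchy by the midpoint inequality; completeness provides its limit.\<close>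

lemma midpoint_convex_attains_min:
  fixes K :: "'a::{real_inner,complete_space} set" and \<phi> :: "'a \<Rightarrow> real"
  assumes K: "closed K" "convex K" "K \<noteq> {}"
    and nonneg: "\<And>z. z \<in> K \<Longrightarrow> \<phi> z \<ge> 0"
    and mid: "\<And>a b. a \<in> K \<Longrightarrow> b \<in> K \<Longrightarrow>
                \<phi> ((1/2) *\<^sub>R (a + b)) \<le> (\<phi> a + \<phi> b) / 2 - (norm (a - b))\<^sup>2 / 4"
    and lip: "\<And>a b. a \<in> K \<Longrightarrow> b \<in> K \<Longrightarrow> \<phi> a \<le> \<phi> b + norm (a - b) * (L + norm a + norm b)"
  shows "\<exists>c\<in>K. \<forall>z\<in>K. \<phi> c \<le> \<phi> z"
proof -
  define m where "m = Inf (\<phi> ` K)"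
  have m_le: "m \<le> \<phi> z" if "z \<in> K" for z
    unfolding m_def using nonneg that by (intro cInf_lower bdd_belowI2[where m = 0]) auto
  have "\<exists>z\<in>K. \<phi> z < m + inverse (real (Suc j))" for j
    using cInf_lessD[of "\<phi> ` K" "m + inverse (real (Suc j))"] K(3) by (auto simp: m_def)
  then obtain z where zK: "\<And>j. z j \<in> K" and z_lt: "\<And>j. \<phi> (z j) < m + inverse (real (Suc j))"
    by metis
  have dist_z: "(norm (z i - z j))\<^sup>2 \<le> 2 * inverse (real (Suc i)) + 2 * inverse (real (Suc j))" for i j
  proof -
    have "m \<le> \<phi> ((1/2) *\<^sub>R (z i + z j))"
      by (intro m_le midpoint_mem_convex K(2) zK)
    also have "\<dots> \<le> (\<phi> (z i) + \<phi> (z j)) / 2 - (norm (z i - z j))\<^sup>2 / 4"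
      by (intro mid zK)
    finally have "m \<le> (\<phi> (z i) + \<phi> (z j)) / 2 - (norm (z i - z j))\<^sup>2 / 4" .
    moreover have "N \<le> 2 * I + 2 * J"
      if "m \<le> (A + B) / 2 - N / 4" "A < m + I" "B < m + J" for A B I J N :: real
      using that by (simp add: field_simps)
    ultimately show ?thesis
      using z_lt[of i] z_lt[of j] by blast
  qed
  have "Cauchy z"
  proof (rule metric_CauchyI)
    fix e :: real
    assume e: "e > 0"
    obtain N where N: "inverse (real (Suc N)) < e\<^sup>2 / 4"
      using reals_Archimedean[of "e\<^sup>2 / 4"] e by auto
    have "dist (z i) (z j) < e" if "N \<le> i" "N \<le> j" for i j
    proof -
      have "inverse (real (Suc i)) \<le> inverse (real (Suc N))"
           "inverse (real (Suc j)) \<le> inverse (real (Suc N))"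
        using that by (auto simp: field_simps)
      then have "(norm (z i - z j))\<^sup>2 < e\<^sup>2"
        using dist_z[of i j] N by linarith
      then show ?thesis
        using e by (simp add: dist_norm power_less_imp_less_base)
    qed
    then show "\<exists>M. \<forall>i\<ge>M. \<forall>j\<ge>M. dist (z i) (z j) < e"
      by blast
  qed
  then obtain c where zc: "z \<longlonglongrightarrow> c"
    using Cauchy_convergent_iff convergent_def by blast
  have cK: "c \<in> K"
    using K(1) zK zc closed_sequential_limits by blast
  have "(\<lambda>j. \<phi> (z j)) \<longlonglongrightarrow> m"
  proof (rule real_tendsto_sandwich[of "\<lambda>j. m" _ _ "\<lambda>j. m + inverse (real (Suc j))"])
    show "\<forall>\<^sub>F j in sequentially. m \<le> \<phi> (z j)"
      using m_le zK by simp
    show "\<forall>\<^sub>F j in sequentially. \<phi> (z j) \<le> m + inverse (real (Suc j))"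
      using z_lt by (simp add: less_imp_le)
    show "(\<lambda>j. m + inverse (real (Suc j))) \<longlonglongrightarrow> m"
      using tendsto_add[OF tendsto_const LIMSEQ_inverse_real_of_nat, of m] by simp
  qed simp
  then have "(\<lambda>j. \<phi> (z j) + norm (c - z j) * (L + norm c + norm (z j))) \<longlonglongrightarrow>
               m + norm (c - c) * (L + norm c + norm c)"
    by (intro tendsto_intros zc)
  then have "(\<lambda>j. \<phi> (z j) + norm (c - z j) * (L + norm c + norm (z j))) \<longlonglongrightarrow> m"
    by simp
  then have "\<phi> c \<le> m"
    by (rule tendsto_lowerbound) (use lip cK zK in auto)
  then show ?thesis
    using cK m_le by force
qed

lemma midpoint_convex_min_unique:
  assumes K: "convex K" and c: "c \<in> K" "\<And>z. z \<in> K \<Longrightarrow> \<phi> c \<le> \<phi> z"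
    and d: "d \<in> K" "\<phi> d \<le> \<phi> c"
    and mid: "\<phi> ((1/2) *\<^sub>R (c + d)) \<le> (\<phi> c + \<phi> d) / 2 - (norm (c - d))\<^sup>2 / 4"
  shows "d = c"
proof -
  have "\<phi> c \<le> \<phi> ((1/2) *\<^sub>R (c + d))"
    by (intro c(2) midpoint_mem_convex K c(1) d(1))
  moreover have "N \<le> 0" if "A \<le> M" "M \<le> (A + B) / 2 - N / 4" "B \<le> A" for A B M N :: real
    using that by (simp add: field_simps)
  ultimately have "(norm (c - d))\<^sup>2 \<le> 0"
    using mid d(2) by blast
  then show ?thesis
    by simp
qed

subsection \<open>Metric projection\<close>

lemma metric_proj_unique:
  fixes K :: "'a::{real_inner,complete_space} set"
  assumes K: "closed K" "convex K" "K \<noteq> {}"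
  shows "\<exists>!p. p \<in> K \<and> (\<forall>z\<in>K. norm (x - p) \<le> norm (x - z))"
proof -
  have sq: "norm (x - p) \<le> norm (x - z) \<longleftrightarrow> (norm (x - p))\<^sup>2 \<le> (norm (x - z))\<^sup>2" for p z
    by (simp add: abs_le_square_iff)
  have "\<exists>c\<in>K. \<forall>z\<in>K. (norm (x - c))\<^sup>2 \<le> (norm (x - z))\<^sup>2"
    by (rule midpoint_convex_attains_min[OF K, where L = "2 * norm x"])
       (simp_all add: norm_midpoint_square norm_diff_square_le)
  moreover have "q = p"
    if "p \<in> K" "\<forall>z\<in>K. (norm (x - p))\<^sup>2 \<le> (norm (x - z))\<^sup>2"
       "q \<in> K" "\<forall>z\<in>K. (norm (x - q))\<^sup>2 \<le> (norm (x - z))\<^sup>2" for p q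
    using that by (intro midpoint_convex_min_unique[OF K(2), where \<phi> = "\<lambda>z. (norm (x - z))\<^sup>2"])
      (auto simp: norm_midpoint_square)
  ultimately show ?thesis
    unfolding sq by metis
qed

lemma
  fixes K :: "'a::{real_inner,complete_space} set"
  assumes "closed K" "convex K" "K \<noteq> {}"
  shows metric_proj_in: "metric_proj K x \<in> K"
    and metric_proj_le: "z \<in> K \<Longrightarrow> norm (x - metric_proj K x) \<le> norm (x - z)"
  using theI'[OF metric_proj_unique[OF assms, of x]] unfolding metric_proj_def by auto

lemma metric_proj_inner_le:
  fixes K :: "'a::{real_inner,complete_space} set"
  assumes K: "closed K" "convex K" "K \<noteq> {}" and z: "z \<in> K"
  shows "(x - metric_proj K x) \<bullet> (z - metric_proj K x) \<le> 0"
proof (rule nonpos_if_quadratic_bound)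
  fix t :: real
  assume t: "0 < t" "t \<le> 1"
  define p where "p = metric_proj K x"
  have "(1 - t) *\<^sub>R p + t *\<^sub>R z \<in> K"
    using convexD[OF K(2) metric_proj_in[OF K] z, of "1 - t" t] t by (simp add: p_def)
  then have "norm (x - p) \<le> norm (x - ((1 - t) *\<^sub>R p + t *\<^sub>R z))"
    using metric_proj_le[OF K] by (simp add: p_def)
  also have "\<dots> = norm ((x - p) + (- t *\<^sub>R (z - p)))"
    by (simp add: algebra_simps scaleR_diff_left scaleR_diff_right)
  finally have "(norm (x - p))\<^sup>2 \<le> (norm ((x - p) + (- t *\<^sub>R (z - p))))\<^sup>2"
    by (simp add: power_mono)
  then show "2 * t * ((x - p) \<bullet> (z - p)) \<le> t\<^sup>2 * (norm (z - p))\<^sup>2"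
    unfolding norm_add_square by (simp add: power_mult_distrib)
qed

lemma metric_proj_pythagoras:
  fixes K :: "'a::{real_inner,complete_space} set"
  assumes K: "closed K" "convex K" "K \<noteq> {}" and z: "z \<in> K"
  shows "(norm (z - metric_proj K x))\<^sup>2 + (norm (x - metric_proj K x))\<^sup>2 \<le> (norm (z - x))\<^sup>2"
proof -
  define p where "p = metric_proj K x"
  have "(norm (z - x))\<^sup>2 = (norm ((z - p) + (p - x)))\<^sup>2"
    by simp
  also have "\<dots> = (norm (z - p))\<^sup>2 + (norm (p - x))\<^sup>2 + 2 * ((z - p) \<bullet> (p - x))"
    by (rule norm_add_square)
  finally show ?thesis
    using metric_proj_inner_le[OF K z, of x]
    by (simp add: p_def norm_minus_commute inner_commute inner_diff_right inner_diff_left)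
qed

subsection \<open>Limit superior of bounded real sequences\<close>

text \<open>Meaningful only for bounded sequences: \<open>real_of_ereal\<close> sends \<open>\<plusminus>\<infinity>\<close> to \<open>0\<close>.\<close>

definition real_limsup :: "(nat \<Rightarrow> real) \<Rightarrow> real" where
  "real_limsup a = real_of_ereal (limsup (\<lambda>n. ereal (a n)))"

lemma limsup_eq_real_limsup:
  assumes "Bseq a"
  shows "limsup (\<lambda>n. ereal (a n)) = ereal (real_limsup a)"
proof -
  obtain B where B: "\<And>n. a n \<le> B" "\<And>n. - B \<le> a n"
    using assms by (elim BseqE) (auto simp: abs_le_iff minus_le_iff)
  have "limsup (\<lambda>n. ereal (a n)) \<le> ereal B"
    by (rule Limsup_bounded) (simp add: B)
  moreover have "ereal (- B) \<le> limsup (\<lambda>n. ereal (a n))"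
    by (rule le_Limsup) (simp_all add: B)
  ultimately have "\<bar>limsup (\<lambda>n. ereal (a n))\<bar> \<noteq> \<infinity>"
    by auto
  then show ?thesis
    unfolding real_limsup_def by (simp add: ereal_real')
qed

lemma Bseq_add_Bseq:
  fixes a b :: "nat \<Rightarrow> 'a::real_normed_vector"
  assumes "Bseq a" "Bseq b"
  shows "Bseq (\<lambda>n. a n + b n)"
proof -
  obtain A B where "\<And>n. norm (a n) \<le> A" "\<And>n. norm (b n) \<le> B"
    using assms by (meson BseqE)
  then show ?thesis
    by (intro BseqI'[of _ "A + B"]) (meson add_mono norm_triangle_le)
qed

lemma real_limsup_le_add_null:
  assumes "Bseq a" "Bseq b" "\<forall>\<^sub>F n in sequentially. a n \<le> b n + g n" "g \<longlonglongrightarrow> 0"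
  shows "real_limsup a \<le> real_limsup b"
proof -
  have "limsup (\<lambda>n. ereal (a n)) \<le> limsup (\<lambda>n. ereal (g n) + ereal (b n))"
    by (rule Limsup_mono) (use assms(3) in \<open>auto elim: eventually_mono simp: add.commute\<close>)
  also have "\<dots> = ereal 0 + limsup (\<lambda>n. ereal (b n))"
    by (rule ereal_limsup_lim_add) (use assms(4) in \<open>auto simp: lim_ereal\<close>)
  finally show ?thesis
    using limsup_eq_real_limsup[OF assms(1)] limsup_eq_real_limsup[OF assms(2)] by simp
qed

lemma real_limsup_mono:
  assumes "Bseq a" "Bseq b" "\<forall>\<^sub>F n in sequentially. a n \<le> b n"
  shows "real_limsup a \<le> real_limsup b"
  by (rule real_limsup_le_add_null[OF assms(1,2), where g = "\<lambda>n. 0"]) (use assms(3) in auto)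

lemma real_limsup_add_le:
  assumes "Bseq a" "Bseq b"
  shows "real_limsup (\<lambda>n. a n + b n) \<le> real_limsup a + real_limsup b"
proof -
  have "limsup (\<lambda>n. ereal (a n + b n)) = limsup (\<lambda>n. ereal (a n) + ereal (b n))"
    by simp
  also have "\<dots> \<le> limsup (\<lambda>n. ereal (a n)) + limsup (\<lambda>n. ereal (b n))"
    by (rule ereal_limsup_add_mono)
  finally show ?thesis
    using limsup_eq_real_limsup assms Bseq_add_Bseq[OF assms] by simp
qed

lemma real_limsup_tendsto_add:
  assumes "Bseq a" "b \<longlonglongrightarrow> l"
  shows "real_limsup (\<lambda>n. b n + a n) = l + real_limsup a"
proof -
  have "limsup (\<lambda>n. ereal (b n + a n)) = limsup (\<lambda>n. ereal (b n) + ereal (a n))"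
    by simp
  also have "\<dots> = ereal l + limsup (\<lambda>n. ereal (a n))"
    by (rule ereal_limsup_lim_add) (use assms(2) in \<open>auto simp: lim_ereal\<close>)
  moreover have "Bseq (\<lambda>n. b n + a n)"
    using assms convergent_imp_Bseq[of b] by (intro Bseq_add_Bseq) (auto simp: convergent_def)
  ultimately show ?thesis
    using limsup_eq_real_limsup[OF assms(1)] limsup_eq_real_limsup by simp
qed

lemma real_limsup_cmult:
  assumes "Bseq a" "c \<ge> 0"
  shows "real_limsup (\<lambda>n. c * a n) = c * real_limsup a"
proof -
  have "limsup (\<lambda>n. ereal (c * a n)) = ereal c * limsup (\<lambda>n. ereal (a n))"
    using limsup_ereal_mult_left[of c "\<lambda>n. ereal (a n)"] assms(2) by simp
  then show ?thesis
    unfolding real_limsup_def using limsup_eq_real_limsup[OF assms(1)] by simp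
qed

lemma real_limsup_tendsto:
  assumes "a \<longlonglongrightarrow> l"
  shows "real_limsup a = l"
proof -
  have "limsup (\<lambda>n. ereal (a n)) = ereal l"
    by (rule lim_imp_Limsup) (use assms in \<open>auto simp: lim_ereal\<close>)
  then show ?thesis
    unfolding real_limsup_def by simp
qed

lemma tendsto_zero_if_subseq_limits_zero:
  fixes a :: "nat \<Rightarrow> real"
  assumes "Bseq a" and sub: "\<And>\<sigma> l. strict_mono \<sigma> \<Longrightarrow> (a \<circ> \<sigma>) \<longlonglongrightarrow> l \<Longrightarrow> l = 0"
  shows "a \<longlonglongrightarrow> 0"
proof -
  have limsup_zero: "limsup (\<lambda>n. ereal (b n)) = 0"
    if "Bseq b" and "\<And>\<sigma> l. strict_mono \<sigma> \<Longrightarrow> (b \<circ> \<sigma>) \<longlonglongrightarrow> l \<Longrightarrow> l = 0" for b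
  proof -
    obtain \<sigma> where \<sigma>: "strict_mono \<sigma>" "((\<lambda>n. ereal (b n)) \<circ> \<sigma>) \<longlonglongrightarrow> limsup (\<lambda>n. ereal (b n))"
      using limsup_subseq_lim by blast
    then have "(b \<circ> \<sigma>) \<longlonglongrightarrow> real_limsup b"
      using limsup_eq_real_limsup[OF that(1)] by (simp add: o_def lim_ereal)
    then show ?thesis
      using that \<sigma>(1) limsup_eq_real_limsup[OF that(1)] by (simp add: zero_ereal_def)
  qed
  have "limsup (\<lambda>n. ereal (- a n)) = 0"
  proof (rule limsup_zero)
    show "Bseq (\<lambda>n. - a n)"
      using assms(1) by (simp add: Bseq_minus_iff)
    fix \<sigma> l
    assume "strict_mono \<sigma>" "((\<lambda>n. - a n) \<circ> \<sigma>) \<longlonglongrightarrow> l"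
    then have "(a \<circ> \<sigma>) \<longlonglongrightarrow> - l"
      using tendsto_minus[of "(\<lambda>n. - a n) \<circ> \<sigma>" l] by (simp add: o_def)
    then show "l = 0"
      using sub \<open>strict_mono \<sigma>\<close> by fastforce
  qed
  then have "liminf (\<lambda>n. ereal (a n)) = 0"
    using ereal_Liminf_uminus[of sequentially "\<lambda>n. ereal (- a n)"] by simp
  moreover have "limsup (\<lambda>n. ereal (a n)) = 0"
    using limsup_zero assms by blast
  ultimately have "(\<lambda>n. ereal (a n)) \<longlonglongrightarrow> 0"
    by (simp add: tendsto_iff_Liminf_eq_Limsup)
  then show ?thesis
    by (simp add: zero_ereal_def lim_ereal)
qed

subsection \<open>Asymptotic centers\<close>

definition asymp_dist_sq :: "(nat \<Rightarrow> 'a::real_inner) \<Rightarrow> 'a \<Rightarrow> real" where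
  "asymp_dist_sq s z = real_limsup (\<lambda>n. (norm (s n - z))\<^sup>2)"

definition asymp_center :: "(nat \<Rightarrow> 'a::real_inner) \<Rightarrow> 'a \<Rightarrow> bool" where
  "asymp_center s c \<longleftrightarrow> (\<forall>z. asymp_dist_sq s c \<le> asymp_dist_sq s z)"

lemma Bseq_norm_diff_square:
  fixes s :: "nat \<Rightarrow> 'a::real_normed_vector"
  assumes "Bseq s"
  shows "Bseq (\<lambda>n. (norm (s n - z))\<^sup>2)"
proof -
  obtain M where M: "\<And>n. norm (s n) \<le> M"
    using assms by (meson BseqE)
  have "norm (s n - z) \<le> M + norm z" for n
    using M[of n] norm_triangle_ineq4[of "s n" z] by linarith
  then have "norm ((norm (s n - z))\<^sup>2) \<le> (M + norm z)\<^sup>2" for n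
    by (simp add: power_mono)
  then show ?thesis
    by (rule BseqI')
qed

lemma asymp_dist_sq_nonneg:
  assumes "Bseq s"
  shows "0 \<le> asymp_dist_sq s z"
  using real_limsup_mono[OF _ Bseq_norm_diff_square[OF assms], of "\<lambda>n. 0"]
    real_limsup_tendsto[of "\<lambda>n. 0" 0]
  by (simp add: asymp_dist_sq_def)

lemma asymp_dist_sq_midpoint:
  assumes "Bseq s"
  shows "asymp_dist_sq s ((1/2) *\<^sub>R (a + b)) \<le>
           (asymp_dist_sq s a + asymp_dist_sq s b) / 2 - (norm (a - b))\<^sup>2 / 4"
proof -
  define da db where "da n = (1/2) * (norm (s n - a))\<^sup>2" and "db n = (1/2) * (norm (s n - b))\<^sup>2" for n
  have "Bseq (\<lambda>n. (1/2) * (norm (s n - z))\<^sup>2)" for z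
    by (rule iffD2[OF Bseq_cmult_iff]) (simp_all add: Bseq_norm_diff_square[OF assms])
  then have bdd: "Bseq da" "Bseq db"
    unfolding da_def db_def by blast+
  have "(\<lambda>n. (norm (s n - (1/2) *\<^sub>R (a + b)))\<^sup>2) = (\<lambda>n. - (norm (a - b))\<^sup>2 / 4 + (da n + db n))"
    by (simp add: fun_eq_iff norm_midpoint_square da_def db_def)
  then have "asymp_dist_sq s ((1/2) *\<^sub>R (a + b)) = - (norm (a - b))\<^sup>2 / 4 + real_limsup (\<lambda>n. da n + db n)"
    unfolding asymp_dist_sq_def by (simp only:) (rule real_limsup_tendsto_add[OF Bseq_add_Bseq[OF bdd]], simp)
  also have "real_limsup (\<lambda>n. da n + db n) \<le> real_limsup da + real_limsup db"
    by (rule real_limsup_add_le[OF bdd])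
  also have "real_limsup da + real_limsup db = (asymp_dist_sq s a + asymp_dist_sq s b) / 2"
    unfolding asymp_dist_sq_def da_def db_def
    using real_limsup_cmult[OF Bseq_norm_diff_square[OF assms], of "1/2"] by simp
  finally show ?thesis
    by simp
qed

lemma asymp_dist_sq_le:
  assumes M: "\<And>n. norm (s n) \<le> M"
  shows "asymp_dist_sq s a \<le> asymp_dist_sq s b + norm (a - b) * (2 * M + norm a + norm b)"
proof -
  have s: "Bseq s"
    using M by (rule BseqI')
  have "(norm (s n - a))\<^sup>2 \<le> norm (a - b) * (2 * M + norm a + norm b) + (norm (s n - b))\<^sup>2" for n
  proof -
    have "(norm (s n - a))\<^sup>2 \<le> (norm (s n - b))\<^sup>2 + norm (a - b) * (2 * norm (s n) + norm a + norm b)"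
      by (rule norm_diff_square_le)
    also have "\<dots> \<le> (norm (s n - b))\<^sup>2 + norm (a - b) * (2 * M + norm a + norm b)"
      using M[of n] by (intro add_left_mono mult_left_mono) auto
    finally show ?thesis
      by simp
  qed
  then have "asymp_dist_sq s a \<le>
               real_limsup (\<lambda>n. norm (a - b) * (2 * M + norm a + norm b) + (norm (s n - b))\<^sup>2)"
    unfolding asymp_dist_sq_def
    by (intro real_limsup_mono Bseq_norm_diff_square s Bseq_add_Bseq always_eventually allI) auto
  also have "\<dots> = norm (a - b) * (2 * M + norm a + norm b) + asymp_dist_sq s b"
    unfolding asymp_dist_sq_def by (rule real_limsup_tendsto_add[OF Bseq_norm_diff_square[OF s]]) simp
  finally show ?thesis
    by simp
qed

lemma asymp_center_exists:
  fixes s :: "nat \<Rightarrow> 'a::{real_inner,complete_space}"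
  assumes "Bseq s"
  shows "\<exists>c. asymp_center s c"
proof -
  obtain M where M: "\<And>n. norm (s n) \<le> M"
    using assms by (meson BseqE)
  show ?thesis
    using midpoint_convex_attains_min[of UNIV "asymp_dist_sq s" "2 * M"]
      asymp_dist_sq_nonneg[OF assms] asymp_dist_sq_midpoint[OF assms] asymp_dist_sq_le[OF M]
    by (simp add: asymp_center_def add.assoc)
qed

lemma asymp_center_unique:
  assumes "Bseq s" "asymp_center s c" "asymp_dist_sq s d \<le> asymp_dist_sq s c"
  shows "d = c"
  using assms asymp_dist_sq_midpoint[OF assms(1)]
  by (intro midpoint_convex_min_unique[of UNIV _ "asymp_dist_sq s"]) (auto simp: asymp_center_def)

text \<open>Projecting the center onto \<open>K\<close> decreases every distance to the tail of \<open>s\<close>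
  by the same amount, so the center cannot lie outside \<open>K\<close>.\<close>

lemma asymp_center_in_closed_convex:
  fixes s :: "nat \<Rightarrow> 'a::{real_inner,complete_space}"
  assumes s: "Bseq s" "asymp_center s c"
    and K: "closed K" "convex K" and ev: "\<forall>\<^sub>F n in sequentially. s n \<in> K"
  shows "c \<in> K"
proof -
  have K_ne: "K \<noteq> {}"
    using ev by (auto simp: eventually_sequentially)
  define p where "p = metric_proj K c"
  have "real_limsup (\<lambda>n. (norm (c - p))\<^sup>2 + (norm (s n - p))\<^sup>2) \<le> asymp_dist_sq s c"
    unfolding asymp_dist_sq_def
  proof (intro real_limsup_mono Bseq_add_Bseq Bseq_norm_diff_square s(1))
    have "(norm (c - p))\<^sup>2 + (norm (z - p))\<^sup>2 \<le> (norm (z - c))\<^sup>2" if "z \<in> K" for z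
      using metric_proj_pythagoras[OF K K_ne that, of c] by (simp add: p_def)
    then show "\<forall>\<^sub>F n in sequentially. (norm (c - p))\<^sup>2 + (norm (s n - p))\<^sup>2 \<le> (norm (s n - c))\<^sup>2"
      using ev by (auto elim: eventually_mono)
  qed simp
  moreover have "real_limsup (\<lambda>n. (norm (c - p))\<^sup>2 + (norm (s n - p))\<^sup>2) =
                   (norm (c - p))\<^sup>2 + asymp_dist_sq s p"
    unfolding asymp_dist_sq_def by (rule real_limsup_tendsto_add[OF Bseq_norm_diff_square[OF s(1)]]) simp
  moreover have "asymp_dist_sq s c \<le> asymp_dist_sq s p"
    using s(2) by (simp add: asymp_center_def)
  ultimately have "(norm (c - p))\<^sup>2 \<le> 0"
    by linarith
  then have "p = c"
    by simp
  then show ?thesis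
    using metric_proj_in[OF K K_ne, of c] by (simp only: p_def)
qed

lemma asymp_center_inner_tendsto:
  assumes s: "Bseq s" "asymp_center s c" and lim: "(\<lambda>n. (s n - c) \<bullet> w) \<longlonglongrightarrow> \<delta>"
  shows "\<delta> = 0"
proof -
  have shift: "2 * t * \<delta> \<le> t\<^sup>2 * (norm w)\<^sup>2" for t
  proof -
    have "(norm (s n - (c + t *\<^sub>R w)))\<^sup>2 = (t\<^sup>2 * (norm w)\<^sup>2 - 2 * t * ((s n - c) \<bullet> w)) + (norm (s n - c))\<^sup>2"
      for n
      using norm_add_square[of "s n - c" "- t *\<^sub>R w"] by (simp add: algebra_simps power_mult_distrib)
    then have "asymp_dist_sq s (c + t *\<^sub>R w) = (t\<^sup>2 * (norm w)\<^sup>2 - 2 * t * \<delta>) + asymp_dist_sq s c"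
      unfolding asymp_dist_sq_def
      by (simp only:) (rule real_limsup_tendsto_add[OF Bseq_norm_diff_square[OF s(1)]], intro tendsto_intros lim)
    moreover have "asymp_dist_sq s c \<le> asymp_dist_sq s (c + t *\<^sub>R w)"
      using s(2) by (simp add: asymp_center_def)
    ultimately show ?thesis
      by simp
  qed
  have "\<delta> \<le> 0"
    using shift by (intro nonpos_if_quadratic_bound)
  moreover have "- \<delta> \<le> 0"
    using shift[of "- t" for t] by (intro nonpos_if_quadratic_bound) simp
  ultimately show ?thesis
    by simp
qed

lemma asymp_dist_sq_eq_if_close:
  fixes s t :: "nat \<Rightarrow> 'a::real_inner"
  assumes s: "Bseq s" and t: "Bseq t" and close: "(\<lambda>n. norm (s n - t n)) \<longlonglongrightarrow> 0"
  shows "asymp_dist_sq s = asymp_dist_sq t"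
proof
  fix z
  obtain M where M: "\<And>n. norm (s n) \<le> M" "\<And>n. norm (t n) \<le> M"
    using s t by (elim BseqE) (metis max.cobounded1 max.cobounded2 order_trans)
  have le: "asymp_dist_sq q z \<le> asymp_dist_sq p z"
    if p: "Bseq p" "\<And>n. norm (p n) \<le> M" and q: "Bseq q" "\<And>n. norm (q n) \<le> M"
      and pq: "(\<lambda>n. norm (q n - p n)) \<longlonglongrightarrow> 0" for p q :: "nat \<Rightarrow> 'a"
    unfolding asymp_dist_sq_def
  proof (rule real_limsup_le_add_null[OF Bseq_norm_diff_square[OF q(1)] Bseq_norm_diff_square[OF p(1)]])
    show "(\<lambda>n. norm (q n - p n) * (2 * norm z + 2 * M)) \<longlonglongrightarrow> 0"
      using tendsto_mult[OF pq tendsto_const, of "2 * norm z + 2 * M"] by simp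
    have "(norm (q n - z))\<^sup>2 \<le> (norm (p n - z))\<^sup>2 + norm (q n - p n) * (2 * norm z + 2 * M)" for n
    proof -
      have "(norm (z - q n))\<^sup>2 \<le> (norm (z - p n))\<^sup>2 + norm (q n - p n) * (2 * norm z + norm (q n) + norm (p n))"
        by (rule norm_diff_square_le)
      also have "\<dots> \<le> (norm (z - p n))\<^sup>2 + norm (q n - p n) * (2 * norm z + 2 * M)"
        using p(2)[of n] q(2)[of n] by (intro add_left_mono mult_left_mono) auto
      finally show ?thesis
        by (simp add: norm_minus_commute)
    qed
    then show "\<forall>\<^sub>F n in sequentially.
                 (norm (q n - z))\<^sup>2 \<le> (norm (p n - z))\<^sup>2 + norm (q n - p n) * (2 * norm z + 2 * M)"
      by simp
  qed
  have "(\<lambda>n. norm (t n - s n)) \<longlonglongrightarrow> 0"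
    using close by (simp add: norm_minus_commute)
  then show "asymp_dist_sq s z = asymp_dist_sq t z"
    using le[OF s M(1) t M(2)] le[OF t M(2) s M(1) close] by simp
qed

subsection \<open>Fejer monotone sequences\<close>

definition fejer_monotone :: "'a::real_normed_vector set \<Rightarrow> (nat \<Rightarrow> 'a) \<Rightarrow> bool" where
  "fejer_monotone K x \<longleftrightarrow> (\<forall>p\<in>K. \<forall>n. norm (x (Suc n) - p) \<le> norm (x n - p))"

lemma fejer_monotone_dist_antimono:
  assumes "fejer_monotone K x" "p \<in> K" "n \<le> m"
  shows "norm (x m - p) \<le> norm (x n - p)"
  using assms(3)
proof (induction m rule: dec_induct)
  case (step m)
  then show ?case
    using assms(1,2) unfolding fejer_monotone_def by (meson order_trans)
qed simp

lemma fejer_monotone_convergent: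
  assumes "fejer_monotone K x" "p \<in> K"
  shows "convergent (\<lambda>n. norm (x n - p))"
proof -
  have "decseq (\<lambda>n. norm (x n - p))"
    using assms unfolding fejer_monotone_def by (intro decseq_SucI) blast
  then obtain L where "(\<lambda>n. norm (x n - p)) \<longlonglongrightarrow> L"
    using decseq_convergent[of _ 0] by (metis norm_ge_zero)
  then show ?thesis
    by (rule convergentI)
qed

lemma fejer_monotone_Bseq:
  assumes "fejer_monotone K x" "K \<noteq> {}"
  shows "Bseq x"
proof -
  obtain p where p: "p \<in> K"
    using assms(2) by blast
  have "norm (x n) \<le> norm (x 0 - p) + norm p" for n
    using fejer_monotone_dist_antimono[OF assms(1) p, of 0 n] norm_triangle_ineq2[of "x n" p] by simp
  then show ?thesis
    by (rule BseqI')
qed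

lemma asymp_dist_sq_subseq:
  assumes "strict_mono \<sigma>" "convergent (\<lambda>n. norm (x n - p))"
  shows "asymp_dist_sq (x \<circ> \<sigma>) p = asymp_dist_sq x p"
proof -
  obtain L where "(\<lambda>n. norm (x n - p)) \<longlonglongrightarrow> L"
    using assms(2) by (auto simp: convergent_def)
  then have L: "(\<lambda>n. (norm (x n - p))\<^sup>2) \<longlonglongrightarrow> L\<^sup>2"
    by (intro tendsto_intros)
  moreover have "(\<lambda>n. (norm ((x \<circ> \<sigma>) n - p))\<^sup>2) \<longlonglongrightarrow> L\<^sup>2"
    using LIMSEQ_subseq_LIMSEQ[OF L assms(1)] by (simp add: o_def)
  ultimately show ?thesis
    unfolding asymp_dist_sq_def by (simp only: real_limsup_tendsto)
qed

text \<open>Opial's argument in the form of asymptotic centers: the center of the whole sequence is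
  also the center of every subsequence, which forces every weak cluster value of
  \<open>(x n - c) \<bullet> w\<close> to vanish.\<close>

lemma weakly_conv_if_subseq_centers_in:
  fixes x :: "nat \<Rightarrow> 'a::{real_inner,complete_space}"
  assumes fejer: "fejer_monotone K x" and K: "K \<noteq> {}"
    and centers: "\<And>\<sigma> c. strict_mono \<sigma> \<Longrightarrow> asymp_center (x \<circ> \<sigma>) c \<Longrightarrow> c \<in> K"
  shows "\<exists>c\<in>K. weakly_conv x c"
proof -
  have x: "Bseq x"
    by (rule fejer_monotone_Bseq[OF fejer K])
  obtain c where c: "asymp_center x c"
    using asymp_center_exists[OF x] by blast
  have cK: "c \<in> K"
    using centers[of id c] c by (simp add: strict_mono_def)
  have c_subseq: "asymp_center (x \<circ> \<sigma>) c" if \<sigma>: "strict_mono \<sigma>" for \<sigma>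
    unfolding asymp_center_def
  proof
    fix z
    have x\<sigma>: "Bseq (x \<circ> \<sigma>)"
      using Bseq_subseq[OF x] by (simp add: o_def)
    obtain c' where c': "asymp_center (x \<circ> \<sigma>) c'"
      using asymp_center_exists[OF x\<sigma>] by blast
    have c'K: "c' \<in> K"
      by (rule centers[OF \<sigma> c'])
    have "asymp_dist_sq (x \<circ> \<sigma>) c = asymp_dist_sq x c"
      by (intro asymp_dist_sq_subseq \<sigma> fejer_monotone_convergent[OF fejer cK])
    also have "\<dots> \<le> asymp_dist_sq x c'"
      using c by (simp add: asymp_center_def)
    also have "\<dots> = asymp_dist_sq (x \<circ> \<sigma>) c'"
      by (intro asymp_dist_sq_subseq[symmetric] \<sigma> fejer_monotone_convergent[OF fejer c'K])
    also have "\<dots> \<le> asymp_dist_sq (x \<circ> \<sigma>) z"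
      using c' by (simp add: asymp_center_def)
    finally show "asymp_dist_sq (x \<circ> \<sigma>) c \<le> asymp_dist_sq (x \<circ> \<sigma>) z" .
  qed
  have "(\<lambda>n. (x n - c) \<bullet> w) \<longlonglongrightarrow> 0" for w
  proof (rule tendsto_zero_if_subseq_limits_zero)
    obtain M where M: "\<And>n. norm (x n) \<le> M"
      using x by (meson BseqE)
    have "norm ((x n - c) \<bullet> w) \<le> (M + norm c) * norm w" for n
    proof -
      have "norm ((x n - c) \<bullet> w) \<le> norm (x n - c) * norm w"
        using Cauchy_Schwarz_ineq2 by simp
      also have "\<dots> \<le> (M + norm c) * norm w"
        using M[of n] norm_triangle_ineq4[of "x n" c] by (intro mult_right_mono) auto
      finally show ?thesis .
    qed
    then show "Bseq (\<lambda>n. (x n - c) \<bullet> w)"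
      by (rule BseqI')
  next
    fix \<sigma> l
    assume \<sigma>: "strict_mono \<sigma>" and l: "((\<lambda>n. (x n - c) \<bullet> w) \<circ> \<sigma>) \<longlonglongrightarrow> l"
    show "l = 0"
      using l by (intro asymp_center_inner_tendsto[OF _ c_subseq[OF \<sigma>]])
        (auto simp: o_def intro: Bseq_subseq[OF x])
  qed
  then have "(\<lambda>n. (x n - c) \<bullet> w + c \<bullet> w) \<longlonglongrightarrow> 0 + c \<bullet> w" for w
    by (intro tendsto_intros)
  then have "weakly_conv x c"
    unfolding weakly_conv_def by (simp add: inner_diff_left)
  then show ?thesis
    using cK by blast
qed

lemma metric_proj_fejer_Cauchy:
  fixes x :: "nat \<Rightarrow> 'a::{real_inner,complete_space}"
  assumes K: "closed K" "convex K" "K \<noteq> {}" and fejer: "fejer_monotone K x"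
  shows "Cauchy (\<lambda>n. metric_proj K (x n))"
proof -
  define P where "P n = metric_proj K (x n)" for n
  define d where "d n = (norm (x n - P n))\<^sup>2" for n
  have P_in: "P n \<in> K" for n
    unfolding P_def by (rule metric_proj_in[OF K])
  have gap: "(norm (P n - P m))\<^sup>2 + d m \<le> d n" if "n \<le> m" for n m
  proof -
    have "(norm (P n - P m))\<^sup>2 + d m \<le> (norm (P n - x m))\<^sup>2"
      unfolding P_def d_def by (rule metric_proj_pythagoras[OF K metric_proj_in[OF K]])
    also have "\<dots> \<le> d n"
      using fejer_monotone_dist_antimono[OF fejer P_in that]
      by (simp add: d_def norm_minus_commute power_mono)
    finally show ?thesis .
  qed
  have "d (Suc n) \<le> d n" for n
    using gap[of n "Suc n"] zero_le_power2[of "norm (P n - P (Suc n))"] by linarith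
  then have "decseq d"
    by (rule decseq_SucI)
  moreover have "\<forall>i. 0 \<le> d i"
    by (simp add: d_def)
  ultimately obtain D where "d \<longlonglongrightarrow> D"
    by (rule decseq_convergent)
  then have "Cauchy d"
    by (rule LIMSEQ_imp_Cauchy)
  have "Cauchy P"
  proof (rule metric_CauchyI)
    fix e :: real
    assume e: "e > 0"
    then obtain N where N: "\<And>m n. m \<ge> N \<Longrightarrow> n \<ge> N \<Longrightarrow> dist (d m) (d n) < e\<^sup>2"
      using \<open>Cauchy d\<close> unfolding Cauchy_def by (meson zero_less_power)
    have gap_abs: "(norm (P m - P n))\<^sup>2 \<le> \<bar>d m - d n\<bar>" for m n
    proof (cases "m \<le> n")
      case True
      then show ?thesis
        using gap[of m n] by linarith
    next
      case False
      then show ?thesis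
        using gap[of n m] by (simp add: norm_minus_commute)
    qed
    have "dist (P m) (P n) < e" if "m \<ge> N" "n \<ge> N" for m n
    proof -
      have "(norm (P m - P n))\<^sup>2 \<le> dist (d m) (d n)"
        using gap_abs[of m n] by (simp add: dist_real_def)
      then have "(norm (P m - P n))\<^sup>2 < e\<^sup>2"
        using N[OF that] by linarith
      then show ?thesis
        using e by (simp add: dist_norm power_less_imp_less_base)
    qed
    then show "\<exists>M. \<forall>m\<ge>M. \<forall>n\<ge>M. dist (P m) (P n) < e"
      by blast
  qed
  moreover have "P = (\<lambda>n. metric_proj K (x n))"
    by (simp add: fun_eq_iff P_def)
  ultimately show ?thesis
    by simp
qed

lemma metric_proj_fejer_tendsto:
  fixes x :: "nat \<Rightarrow> 'a::{real_inner,complete_space}"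
  assumes K: "closed K" "convex K" "K \<noteq> {}" and fejer: "fejer_monotone K x"
    and weak: "weakly_conv x c" and cK: "c \<in> K"
  shows "(\<lambda>n. metric_proj K (x n)) \<longlonglongrightarrow> c"
proof -
  define P where "P n = metric_proj K (x n)" for n
  have "Cauchy P"
    using metric_proj_fejer_Cauchy[OF K fejer] by (simp add: P_def[abs_def])
  then obtain v where Pv: "P \<longlonglongrightarrow> v"
    using Cauchy_convergent_iff convergent_def by blast
  obtain M where M: "\<And>n. norm (x n) \<le> M"
    using fejer_monotone_Bseq[OF fejer K(3)] by (meson BseqE)
  have x_c: "(\<lambda>n. (x n - c) \<bullet> w) \<longlonglongrightarrow> 0" for w
  proof -
    have "(\<lambda>n. x n \<bullet> w - c \<bullet> w) \<longlonglongrightarrow> c \<bullet> w - c \<bullet> w"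
      using weak unfolding weakly_conv_def by (intro tendsto_diff tendsto_const) blast
    then show ?thesis
      by (simp add: inner_diff_left)
  qed
  have "(\<lambda>n. norm (v - P n)) \<longlonglongrightarrow> 0"
    using tendsto_norm[OF tendsto_diff[OF tendsto_const Pv, of v]] by simp
  then have x_P: "(\<lambda>n. (x n - c) \<bullet> (v - P n)) \<longlonglongrightarrow> 0"
  proof (rule tendsto_0_le[where K = "M + norm c"], intro always_eventually allI)
    fix n
    have "norm ((x n - c) \<bullet> (v - P n)) \<le> norm (x n - c) * norm (v - P n)"
      using Cauchy_Schwarz_ineq2 by simp
    also have "\<dots> \<le> (M + norm c) * norm (v - P n)"
      using M[of n] norm_triangle_ineq4[of "x n" c] by (intro mult_right_mono) auto
    finally show "norm ((x n - c) \<bullet> (v - P n)) \<le> norm (norm (v - P n)) * (M + norm c)"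
      by (simp add: mult.commute)
  qed
  have split: "(x n - P n) \<bullet> (c - P n) =
                 (x n - c) \<bullet> (c - v) + (x n - c) \<bullet> (v - P n) + (norm (c - P n))\<^sup>2" for n
  proof -
    have "(x n - P n) \<bullet> (c - P n) = (x n - c) \<bullet> (c - P n) + (c - P n) \<bullet> (c - P n)"
      using inner_add_left[of "x n - c" "c - P n" "c - P n"] by simp
    also have "(x n - c) \<bullet> (c - P n) = (x n - c) \<bullet> (c - v) + (x n - c) \<bullet> (v - P n)"
      using inner_add_right[of "x n - c" "c - v" "v - P n"] by simp
    finally show ?thesis
      by (simp add: power2_norm_eq_inner)
  qed
  have "(\<lambda>n. (x n - P n) \<bullet> (c - P n)) \<longlonglongrightarrow> 0 + 0 + (norm (c - v))\<^sup>2"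
    unfolding split by (intro tendsto_add x_c x_P tendsto_intros Pv)
  moreover have "(x n - P n) \<bullet> (c - P n) \<le> 0" for n
    unfolding P_def by (rule metric_proj_inner_le[OF K cK])
  ultimately have "(norm (c - v))\<^sup>2 \<le> 0"
    by (intro LIMSEQ_le_const2) auto
  then show ?thesis
    using Pv by (simp add: P_def[abs_def])
qed

subsection \<open>Equilibrium problems\<close>

lemma
  assumes "bifun_conds E f"
  shows bifun_conds_diag: "x \<in> E \<Longrightarrow> f x x = 0"
    and bifun_conds_monotone: "x \<in> E \<Longrightarrow> y \<in> E \<Longrightarrow> f x y + f y x \<le> 0"
    and bifun_conds_hemicont: "x \<in> E \<Longrightarrow> y \<in> E \<Longrightarrow> z \<in> E \<Longrightarrow>
          Limsup (at_right 0) (\<lambda>t. ereal (f (t *\<^sub>R z + (1 - t) *\<^sub>R x) y)) \<le> ereal (f x y)"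
    and bifun_conds_convex: "x \<in> E \<Longrightarrow> convex_on E (f x)"
    and bifun_conds_lsc: "x \<in> E \<Longrightarrow> lsc_on E (f x)"
  using assms unfolding bifun_conds_def by auto

lemma closed_sublevel_lsc:
  fixes E :: "'a::metric_space set"
  assumes "closed E" "lsc_on E g"
  shows "closed {z\<in>E. g z \<le> c}"
  unfolding closed_sequential_limits
proof (intro allI impI, elim conjE)
  fix s l
  assume s: "\<forall>n. s n \<in> {z\<in>E. g z \<le> c}" and l: "s \<longlonglongrightarrow> l"
  have lE: "l \<in> E"
    using assms(1) s l closed_sequential_limits by blast
  show "l \<in> {z\<in>E. g z \<le> c}"
  proof (rule ccontr)
    assume "l \<notin> {z\<in>E. g z \<le> c}"
    then have "\<forall>\<^sub>F y in at l within E. c < g y"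
      using assms(2) lE unfolding lsc_on_def by auto
    then obtain U where U: "open U" "l \<in> U" "\<And>y. y \<in> U \<Longrightarrow> y \<noteq> l \<Longrightarrow> y \<in> E \<Longrightarrow> c < g y"
      unfolding eventually_at_topological by blast
    obtain N where "\<And>n. n \<ge> N \<Longrightarrow> s n \<in> U"
      using l U(1,2) unfolding lim_explicit by blast
    then have "s N \<in> U" "s N \<in> E" "g (s N) \<le> c"
      using s by auto
    then have "s N = l"
      using U(3) by force
    then show False
      using s \<open>l \<notin> {z\<in>E. g z \<le> c}\<close> by metis
  qed
qed

lemma convex_sublevel:
  assumes "convex_on E g"
  shows "convex {z\<in>E. g z \<le> c}"
proof (rule convexI)
  fix x y :: 'a and u v :: real
  assume xy: "x \<in> {z\<in>E. g z \<le> c}" "y \<in> {z\<in>E. g z \<le> c}" and uv: "0 \<le> u" "0 \<le> v" "u + v = 1"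
  have "u *\<^sub>R x + v *\<^sub>R y \<in> E"
    using convexD[OF convex_on_imp_convex[OF assms]] xy uv by auto
  moreover have "g (u *\<^sub>R x + v *\<^sub>R y) \<le> u * g x + v * g y"
    using assms xy uv unfolding convex_on_def by auto
  moreover have "u * g x + v * g y \<le> u * c + v * c"
    using xy uv by (intro add_mono mult_left_mono) auto
  moreover have "u * c + v * c = c"
    using uv by (metis distrib_right mult_1)
  ultimately show "u *\<^sub>R x + v *\<^sub>R y \<in> {z\<in>E. g z \<le> c}"
    by simp
qed

text \<open>The nontrivial inclusion uses (A3) along the segment from \<open>x\<close> to \<open>y\<close>,
  on which convexity of \<open>f z\<close> and \<open>f z x \<le> 0\<close> give \<open>f z y \<ge> 0\<close>.\<close>

lemma EP_eq_Minty:
  assumes f: "bifun_conds E f" and E: "convex E"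
  shows "EP E f = {x\<in>E. \<forall>y\<in>E. f y x \<le> 0}"
proof
  show "EP E f \<subseteq> {x\<in>E. \<forall>y\<in>E. f y x \<le> 0}"
    unfolding EP_def using bifun_conds_monotone[OF f] by fastforce
next
  show "{x\<in>E. \<forall>y\<in>E. f y x \<le> 0} \<subseteq> EP E f"
  proof
    fix x
    assume "x \<in> {x\<in>E. \<forall>y\<in>E. f y x \<le> 0}"
    then have x: "x \<in> E" "\<And>y. y \<in> E \<Longrightarrow> f y x \<le> 0"
      by auto
    have "f x y \<ge> 0" if y: "y \<in> E" for y
    proof -
      have pos: "f (t *\<^sub>R y + (1 - t) *\<^sub>R x) y \<ge> 0" if t: "0 < t" "t \<le> 1" for t
      proof -
        define z where "z = t *\<^sub>R y + (1 - t) *\<^sub>R x"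
        have zE: "z \<in> E"
          using convexD[OF E y x(1), of t "1 - t"] t by (simp add: z_def)
        have "0 = f z z"
          using bifun_conds_diag[OF f zE] by simp
        also have "\<dots> = f z ((1 - t) *\<^sub>R x + t *\<^sub>R y)"
          by (simp add: z_def add.commute)
        also have "\<dots> \<le> (1 - t) * f z x + t * f z y"
          by (rule convex_onD[OF bifun_conds_convex[OF f zE]]) (use t x(1) y in auto)
        also have "\<dots> \<le> t * f z y"
          using x(2)[OF zE] t by (simp add: mult_nonneg_nonpos)
        finally show ?thesis
          using t by (simp add: z_def zero_le_mult_iff)
      qed
      have "\<forall>\<^sub>F t in at_right 0. ereal 0 \<le> ereal (f (t *\<^sub>R y + (1 - t) *\<^sub>R x) y)"
        unfolding eventually_at_right_field by (rule exI[of _ 1]) (simp add: pos)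
      then have "ereal 0 \<le> Limsup (at_right 0) (\<lambda>t. ereal (f (t *\<^sub>R y + (1 - t) *\<^sub>R x) y))"
        by (intro le_Limsup) simp_all
      also have "\<dots> \<le> ereal (f x y)"
        by (rule bifun_conds_hemicont[OF f x(1) y y])
      finally show ?thesis
        by simp
    qed
    then show "x \<in> EP E f"
      using x unfolding EP_def by auto
  qed
qed

lemma
  assumes f: "bifun_conds E f" and E: "closed E" "convex E"
  shows closed_EP: "closed (EP E f)"
    and convex_EP: "convex (EP E f)"
proof -
  have EP: "EP E f = E \<inter> (\<Inter>y\<in>E. {z\<in>E. f y z \<le> 0})"
    unfolding EP_eq_Minty[OF f E(2)] by blast
  have "closed {z\<in>E. f y z \<le> 0}" if "y \<in> E" for y
    using closed_sublevel_lsc[OF E(1) bifun_conds_lsc[OF f that]] .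
  then show "closed (EP E f)"
    unfolding EP by (intro closed_Int E(1) closed_INT ballI)
  have "convex {z\<in>E. f y z \<le> 0}" if "y \<in> E" for y
    using convex_sublevel[OF bifun_conds_convex[OF f that]] .
  then show "convex (EP E f)"
    unfolding EP by (intro convex_Int E(2) convex_INT ballI)
qed

lemma resolvent_bifun_le:
  assumes f: "bifun_conds E f" and r: "r > 0"
    and u: "u \<in> E" "\<And>z. z \<in> E \<Longrightarrow> f u z + (1 / r) * ((z - u) \<bullet> (u - x)) \<ge> 0"
    and z: "z \<in> E"
  shows "f z u \<le> (1 / r) * ((z - u) \<bullet> (u - x))"
  using u(2)[OF z] bifun_conds_monotone[OF f u(1) z] by linarith

lemma resolvent_dist_le:
  assumes f: "bifun_conds E f" and r: "r > 0"
    and u: "u \<in> E" "\<And>z. z \<in> E \<Longrightarrow> f u z + (1 / r) * ((z - u) \<bullet> (u - x)) \<ge> 0"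
    and p: "p \<in> EP E f"
  shows "(norm (u - p))\<^sup>2 + (norm (x - u))\<^sup>2 \<le> (norm (x - p))\<^sup>2"
proof -
  have pE: "p \<in> E" "f p u \<ge> 0"
    using p u(1) unfolding EP_def by auto
  then have "0 \<le> (1 / r) * ((p - u) \<bullet> (u - x))"
    using resolvent_bifun_le[OF f r u pE(1)] by linarith
  then have "0 \<le> (p - u) \<bullet> (u - x)"
    using r by (simp add: zero_le_divide_iff)
  moreover have "(p - u) \<bullet> (u - x) = (x - u) \<bullet> (u - p)"
    by (simp add: inner_diff_left inner_diff_right inner_commute algebra_simps)
  moreover have "(norm (x - p))\<^sup>2 = (norm (x - u))\<^sup>2 + (norm (u - p))\<^sup>2 + 2 * ((x - u) \<bullet> (u - p))"
    using norm_add_square[of "x - u" "u - p"] by simp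
  ultimately show ?thesis
    by linarith
qed

subsection \<open>Hybrid mappings\<close>

lemma hybrid_mapsto: "hybrid E S \<Longrightarrow> x \<in> E \<Longrightarrow> S x \<in> E"
  unfolding hybrid_def by auto

lemma hybrid_inner_le:
  assumes "hybrid E S" "x \<in> E" "y \<in> E"
  shows "(norm (S x - S y))\<^sup>2 \<le> (norm (x - y))\<^sup>2 + (x - S x) \<bullet> (y - S y)"
proof -
  define A B D where "A = x - S x" and "B = y - S y" and "D = S x - S y"
  have eqs: "x - y = A + (D - B)" "S x - y = D - B" "S y - x = - (D + A)"
    by (simp_all add: A_def B_def D_def algebra_simps)
  have "3 * (norm (S x - S y))\<^sup>2 \<le> (norm (x - y))\<^sup>2 + (norm (S x - y))\<^sup>2 + (norm (S y - x))\<^sup>2"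
    using assms unfolding hybrid_def by blast
  then have "3 * (D \<bullet> D) \<le> (A + (D - B)) \<bullet> (A + (D - B)) + (D - B) \<bullet> (D - B) + (D + A) \<bullet> (D + A)"
    unfolding eqs norm_minus_cancel D_def[symmetric] power2_norm_eq_inner .
  then show ?thesis
    unfolding eqs(1) power2_norm_eq_inner D_def[symmetric] A_def[symmetric] B_def[symmetric]
    by (simp add: inner_add_left inner_add_right inner_diff_left inner_diff_right inner_commute
        algebra_simps)
qed

lemma hybrid_fixset_dist_le:
  assumes "hybrid E S" "p \<in> fixset E S" "x \<in> E"
  shows "norm (S x - p) \<le> norm (x - p)"
proof -
  have p: "p \<in> E" "S p = p"
    using assms(2) unfolding fixset_def by auto
  have "3 * (norm (S x - S p))\<^sup>2 \<le> (norm (x - p))\<^sup>2 + (norm (S x - p))\<^sup>2 + (norm (S p - x))\<^sup>2"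
    using assms(1,3) p(1) unfolding hybrid_def by blast
  then have "(norm (S x - p))\<^sup>2 \<le> (norm (x - p))\<^sup>2"
    using p(2) by (simp add: norm_minus_commute)
  then show ?thesis
    by (rule power2_le_imp_le) simp
qed

lemma closer_set_eq_halfspace:
  fixes a b :: "'a::real_inner"
  shows "{z. norm (a - z) \<le> norm (b - z)} = {z. (2 *\<^sub>R (b - a)) \<bullet> z \<le> b \<bullet> b - a \<bullet> a}"
proof -
  have "norm (a - z) \<le> norm (b - z) \<longleftrightarrow> (2 *\<^sub>R (b - a)) \<bullet> z \<le> b \<bullet> b - a \<bullet> a" for z
  proof -
    have "norm (a - z) \<le> norm (b - z) \<longleftrightarrow> (norm (a - z))\<^sup>2 \<le> (norm (b - z))\<^sup>2"
      by (simp add: abs_le_square_iff)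
    moreover have "(norm (a - z))\<^sup>2 = a \<bullet> a - 2 * (a \<bullet> z) + z \<bullet> z"
      "(norm (b - z))\<^sup>2 = b \<bullet> b - 2 * (b \<bullet> z) + z \<bullet> z"
      by (simp_all add: power2_norm_eq_inner inner_diff_left inner_diff_right inner_commute)
    moreover have "(2 *\<^sub>R (b - a)) \<bullet> z = 2 * (b \<bullet> z) - 2 * (a \<bullet> z)"
      by (simp add: inner_diff_left)
    ultimately show ?thesis
      by linarith
  qed
  then show ?thesis
    by blast
qed

lemma
  assumes "hybrid E S" "closed E" "convex E"
  shows closed_fixset_hybrid: "closed (fixset E S)"
    and convex_fixset_hybrid: "convex (fixset E S)"
proof -
  have fix_eq: "fixset E S = E \<inter> (\<Inter>y\<in>E. {z. norm (S y - z) \<le> norm (y - z)})"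
  proof
    show "fixset E S \<subseteq> E \<inter> (\<Inter>y\<in>E. {z. norm (S y - z) \<le> norm (y - z)})"
      using hybrid_fixset_dist_le[OF assms(1)] by (auto simp: fixset_def norm_minus_commute)
    show "E \<inter> (\<Inter>y\<in>E. {z. norm (S y - z) \<le> norm (y - z)}) \<subseteq> fixset E S"
    proof
      fix z
      assume "z \<in> E \<inter> (\<Inter>y\<in>E. {z. norm (S y - z) \<le> norm (y - z)})"
      then have "z \<in> E" "norm (S z - z) \<le> norm (z - z)"
        by auto
      then show "z \<in> fixset E S"
        by (simp add: fixset_def)
    qed
  qed
  show "closed (fixset E S)"
    unfolding fix_eq closer_set_eq_halfspace
    by (intro closed_Int assms(2) closed_INT ballI closed_halfspace_le)
  show "convex (fixset E S)"
    unfolding fix_eq closer_set_eq_halfspace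
    by (intro convex_Int assms(3) convex_INT ballI convex_halfspace_le)
qed

text \<open>Demiclosedness of \<open>I - S\<close> at \<open>0\<close>, phrased with asymptotic centers: the hybrid inequality
  bounds the asymptotic distance to \<open>S c\<close> by the one to \<open>c\<close>.\<close>

lemma hybrid_asymp_center_fixed:
  fixes t :: "nat \<Rightarrow> 'a::{real_inner,complete_space}"
  assumes S: "hybrid E S" and tE: "\<And>n. t n \<in> E" and t: "Bseq t" "asymp_center t c"
    and cE: "c \<in> E" and null: "(\<lambda>n. norm (t n - S (t n))) \<longlonglongrightarrow> 0"
  shows "S c = c"
proof -
  define g where "g n = norm (t n - S (t n))" for n
  have "(\<lambda>n. t n - S (t n)) \<longlonglongrightarrow> 0"
    using null by (simp add: tendsto_norm_zero_iff)
  then have "Bseq (\<lambda>n. t n - S (t n))"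
    by (intro convergent_imp_Bseq convergentI)
  then have "Bseq (\<lambda>n. (t n + - (t n - S (t n))) + - S c)"
    using t(1) by (intro Bseq_add Bseq_add_Bseq) (simp_all only: Bseq_minus_iff)
  then have "Bseq (\<lambda>n. S (t n) - S c)"
    by simp
  then obtain B where B: "\<And>n. norm (S (t n) - S c) \<le> B"
    by (meson BseqE)
  have err: "(norm (t n - S c))\<^sup>2 \<le> (norm (t n - c))\<^sup>2 + ((g n)\<^sup>2 + g n * norm (c - S c) + 2 * g n * B)"
    for n
  proof -
    have "(norm (t n - S c))\<^sup>2 = (norm ((t n - S (t n)) + (S (t n) - S c)))\<^sup>2"
      by simp
    also have "\<dots> = (g n)\<^sup>2 + (norm (S (t n) - S c))\<^sup>2 + 2 * ((t n - S (t n)) \<bullet> (S (t n) - S c))"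
      unfolding norm_add_square g_def ..
    finally have eq: "(norm (t n - S c))\<^sup>2 =
        (g n)\<^sup>2 + (norm (S (t n) - S c))\<^sup>2 + 2 * ((t n - S (t n)) \<bullet> (S (t n) - S c))" .
    have "(norm (S (t n) - S c))\<^sup>2 \<le> (norm (t n - c))\<^sup>2 + (t n - S (t n)) \<bullet> (c - S c)"
      by (rule hybrid_inner_le[OF S tE cE])
    moreover have "(t n - S (t n)) \<bullet> (c - S c) \<le> g n * norm (c - S c)"
      unfolding g_def by (rule norm_cauchy_schwarz)
    moreover have "(t n - S (t n)) \<bullet> (S (t n) - S c) \<le> g n * B"
      using norm_cauchy_schwarz[of "t n - S (t n)" "S (t n) - S c"] B[of n]
      unfolding g_def by (meson mult_left_mono norm_ge_zero order_trans)
    ultimately show ?thesis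
      unfolding eq by linarith
  qed
  have "(\<lambda>n. (g n)\<^sup>2 + g n * norm (c - S c) + 2 * g n * B) \<longlonglongrightarrow> 0\<^sup>2 + 0 * norm (c - S c) + 2 * 0 * B"
    unfolding g_def by (intro tendsto_intros null)
  then have "asymp_dist_sq t (S c) \<le> asymp_dist_sq t c"
    unfolding asymp_dist_sq_def
    by (intro real_limsup_le_add_null[OF Bseq_norm_diff_square[OF t(1)] Bseq_norm_diff_square[OF t(1)]
        always_eventually[OF allI[OF err]]]) simp
  then show ?thesis
    by (rule asymp_center_unique[OF t])
qed

subsection \<open>The iteration\<close>

lemma liminf_pos_eventually_gt:
  assumes "liminf (\<lambda>n. ereal (h n)) > 0"
  obtains k where "k > 0" "\<forall>\<^sub>F n in sequentially. h n > k"
proof -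
  obtain k where k: "0 < ereal k" "ereal k < liminf (\<lambda>n. ereal (h n))"
    using ereal_dense2[OF assms] by blast
  from k(2) have "\<forall>\<^sub>F n in sequentially. ereal k < ereal (h n)"
    by (rule less_LiminfD)
  then show ?thesis
    using that k(1) by simp
qed

lemma tendsto_zero_if_scaled_le:
  fixes g h :: "nat \<Rightarrow> real"
  assumes h: "h \<longlonglongrightarrow> 0" and c: "c > 0"
    and le: "\<forall>\<^sub>F n in sequentially. c * g n \<le> h n" and g: "\<And>n. 0 \<le> g n"
  shows "g \<longlonglongrightarrow> 0"
proof (rule tendsto_0_le[OF h, where K = "1 / c"])
  show "\<forall>\<^sub>F n in sequentially. norm (g n) \<le> norm (h n) * (1 / c)"
    using le
  proof eventually_elim
    case (elim n)
    then have "g n \<le> h n / c"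
      using c by (simp add: pos_le_divide_eq mult.commute)
    also have "\<dots> \<le> \<bar>h n\<bar> / c"
      using c by (simp add: divide_right_mono)
    finally show ?case
      using g[of n] by simp
  qed
qed

locale hybrid_ep_scheme =
  fixes E :: "'a::{real_inner, complete_space} set"
    and f :: "'a \<Rightarrow> 'a \<Rightarrow> real"
    and S :: "'a \<Rightarrow> 'a"
    and \<alpha>s \<beta>s r :: "nat \<Rightarrow> real"
    and a b :: real
    and x0 :: 'a
    and x u y :: "nat \<Rightarrow> 'a"
  assumes E: "E \<noteq> {}" "closed E" "convex E"
    and f: "bifun_conds E f"
    and S: "hybrid E S"
    and nonempty: "fixset E S \<inter> EP E f \<noteq> {}"
    and alpha: "a > 0" "\<forall>n. a \<le> \<alpha>s n \<and> \<alpha>s n \<le> 1"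
    and r_pos: "\<forall>n. r n > 0"
    and r_liminf: "liminf (\<lambda>n. ereal (r n)) > 0"
    and b: "0 < b" "b < 1"
    and beta: "\<forall>n. b \<le> \<beta>s n \<and> \<beta>s n \<le> 1"
    and beta_liminf: "liminf (\<lambda>n. ereal (\<beta>s n * (1 - \<beta>s n))) > 0"
    and x0: "x0 \<in> E" "x 0 = x0"
    and u: "\<forall>n. u n \<in> E \<and> (\<forall>z\<in>E. f (u n) z + (1 / r n) * ((z - u n) \<bullet> (u n - x n)) \<ge> 0)"
    and y: "\<forall>n. y n = (1 - \<beta>s n) *\<^sub>R x n + \<beta>s n *\<^sub>R S (u n)"
    and x: "\<forall>n. x (Suc n) = (1 - \<alpha>s n) *\<^sub>R x n + \<alpha>s n *\<^sub>R S (y n)"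
begin

abbreviation Sol :: "'a set" where
  "Sol \<equiv> fixset E S \<inter> EP E f"

lemma closed_Sol: "closed Sol" and convex_Sol: "convex Sol"
  using closed_fixset_hybrid[OF S E(2,3)] convex_fixset_hybrid[OF S E(2,3)]
    closed_EP[OF f E(2,3)] convex_EP[OF f E(2,3)]
  by (auto intro: closed_Int convex_Int)

lemma Sol_dist_le: "p \<in> Sol \<Longrightarrow> z \<in> E \<Longrightarrow> norm (S z - p) \<le> norm (z - p)"
  using hybrid_fixset_dist_le[OF S] by blast

lemma alpha_bounds: "0 < \<alpha>s n" "\<alpha>s n \<le> 1" "a \<le> \<alpha>s n"
  using alpha by (auto intro: less_le_trans)

lemma beta_bounds: "0 < \<beta>s n" "\<beta>s n \<le> 1" "b \<le> \<beta>s n"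
  using beta b by (auto intro: less_le_trans)

lemma u_in_E: "u n \<in> E"
  and u_resolvent: "z \<in> E \<Longrightarrow> f (u n) z + (1 / r n) * ((z - u n) \<bullet> (u n - x n)) \<ge> 0"
  using u by auto

lemma y_in_E_if_x_in_E: "x n \<in> E \<Longrightarrow> y n \<in> E"
  using convexD[OF E(3) _ hybrid_mapsto[OF S u_in_E], of "x n" "1 - \<beta>s n" "\<beta>s n" n] beta_bounds[of n] y
  by simp

lemma x_in_E: "x n \<in> E"
proof (induction n)
  case 0
  then show ?case
    using x0 by simp
next
  case (Suc n)
  then show ?case
    using convexD[OF E(3) Suc hybrid_mapsto[OF S y_in_E_if_x_in_E[OF Suc]], of "1 - \<alpha>s n" "\<alpha>s n"]
      alpha_bounds[of n] x by simp
qed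

lemma y_in_E: "y n \<in> E"
  using y_in_E_if_x_in_E[OF x_in_E] .

definition descent :: "nat \<Rightarrow> real" where
  "descent n = \<alpha>s n * (\<beta>s n * (norm (x n - u n))\<^sup>2 + \<beta>s n * (1 - \<beta>s n) * (norm (x n - S (u n)))\<^sup>2)"

lemma descent_nonneg: "0 \<le> descent n"
  using alpha_bounds[of n] beta_bounds[of n] by (simp add: descent_def)

lemma u_dist_le:
  assumes "p \<in> Sol"
  shows "(norm (u n - p))\<^sup>2 + (norm (x n - u n))\<^sup>2 \<le> (norm (x n - p))\<^sup>2"
proof -
  have "p \<in> EP E f"
    using assms by simp
  then show ?thesis
    using r_pos u_in_E u_resolvent by (intro resolvent_dist_le[OF f, of "r n" "u n" "x n" p]) auto
qed

lemma y_dist_le: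
  assumes p: "p \<in> Sol"
  shows "(norm (y n - p))\<^sup>2 \<le> (norm (x n - p))\<^sup>2 - \<beta>s n * (norm (x n - u n))\<^sup>2
           - \<beta>s n * (1 - \<beta>s n) * (norm (x n - S (u n)))\<^sup>2"
proof -
  have "y n - p = (1 - \<beta>s n) *\<^sub>R (x n - p) + \<beta>s n *\<^sub>R (S (u n) - p)"
    using y by (simp add: algebra_simps)
  then have "(norm (y n - p))\<^sup>2 = (1 - \<beta>s n) * (norm (x n - p))\<^sup>2 + \<beta>s n * (norm (S (u n) - p))\<^sup>2
               - \<beta>s n * (1 - \<beta>s n) * (norm (x n - S (u n)))\<^sup>2"
    by (simp add: norm_convex_comb_square)
  also have "\<dots> \<le> (1 - \<beta>s n) * (norm (x n - p))\<^sup>2 + \<beta>s n * ((norm (x n - p))\<^sup>2 - (norm (x n - u n))\<^sup>2)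
               - \<beta>s n * (1 - \<beta>s n) * (norm (x n - S (u n)))\<^sup>2"
  proof -
    have "(norm (S (u n) - p))\<^sup>2 \<le> (norm (u n - p))\<^sup>2"
      using Sol_dist_le[OF p u_in_E] by (simp add: power_mono)
    then have "(norm (S (u n) - p))\<^sup>2 \<le> (norm (x n - p))\<^sup>2 - (norm (x n - u n))\<^sup>2"
      using u_dist_le[OF p, of n] by linarith
    then show ?thesis
      using beta_bounds[of n] by (simp add: mult_left_mono)
  qed
  also have "\<dots> = (norm (x n - p))\<^sup>2 - \<beta>s n * (norm (x n - u n))\<^sup>2
               - \<beta>s n * (1 - \<beta>s n) * (norm (x n - S (u n)))\<^sup>2"
    by (simp add: algebra_simps)
  finally show ?thesis .
qed

lemma x_Suc_dist_le:
  assumes p: "p \<in> Sol"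
  shows "(norm (x (Suc n) - p))\<^sup>2 \<le> (norm (x n - p))\<^sup>2 - descent n"
proof -
  have "x (Suc n) - p = (1 - \<alpha>s n) *\<^sub>R (x n - p) + \<alpha>s n *\<^sub>R (S (y n) - p)"
    using x by (simp add: algebra_simps)
  then have "(norm (x (Suc n) - p))\<^sup>2 = (1 - \<alpha>s n) * (norm (x n - p))\<^sup>2 + \<alpha>s n * (norm (S (y n) - p))\<^sup>2
               - \<alpha>s n * (1 - \<alpha>s n) * (norm (x n - S (y n)))\<^sup>2"
    by (simp add: norm_convex_comb_square)
  also have "\<dots> \<le> (1 - \<alpha>s n) * (norm (x n - p))\<^sup>2 + \<alpha>s n * (norm (y n - p))\<^sup>2"
  proof -
    have "\<alpha>s n * (norm (S (y n) - p))\<^sup>2 \<le> \<alpha>s n * (norm (y n - p))\<^sup>2"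
      using Sol_dist_le[OF p y_in_E, of n] alpha_bounds[of n] by (intro mult_left_mono power_mono) auto
    moreover have "0 \<le> \<alpha>s n * (1 - \<alpha>s n) * (norm (x n - S (y n)))\<^sup>2"
      using alpha_bounds[of n] by simp
    ultimately show ?thesis
      by linarith
  qed
  also have "\<dots> \<le> (1 - \<alpha>s n) * (norm (x n - p))\<^sup>2 + \<alpha>s n * ((norm (x n - p))\<^sup>2
               - \<beta>s n * (norm (x n - u n))\<^sup>2 - \<beta>s n * (1 - \<beta>s n) * (norm (x n - S (u n)))\<^sup>2)"
    using y_dist_le[OF p, of n] alpha_bounds[of n] by (simp add: mult_left_mono)
  also have "\<dots> = (norm (x n - p))\<^sup>2 - descent n"
    by (simp add: descent_def algebra_simps)
  finally show ?thesis .
qed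

lemma fejer_monotone_x: "fejer_monotone Sol x"
  unfolding fejer_monotone_def
proof (intro ballI allI)
  fix p n
  assume "p \<in> Sol"
  then have "(norm (x (Suc n) - p))\<^sup>2 \<le> (norm (x n - p))\<^sup>2"
    using x_Suc_dist_le descent_nonneg[of n] by (smt (verit))
  then show "norm (x (Suc n) - p) \<le> norm (x n - p)"
    by (rule power2_le_imp_le) simp
qed

lemma descent_tendsto_zero: "descent \<longlonglongrightarrow> 0"
proof -
  obtain p where p: "p \<in> Sol"
    using nonempty by blast
  obtain L where "(\<lambda>n. norm (x n - p)) \<longlonglongrightarrow> L"
    using fejer_monotone_convergent[OF fejer_monotone_x p] by (auto simp: convergent_def)
  then have L: "(\<lambda>n. (norm (x n - p))\<^sup>2) \<longlonglongrightarrow> L\<^sup>2"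
    by (intro tendsto_intros)
  have "(\<lambda>n. (norm (x n - p))\<^sup>2 - (norm (x (Suc n) - p))\<^sup>2) \<longlonglongrightarrow> L\<^sup>2 - L\<^sup>2"
    by (intro tendsto_diff L LIMSEQ_Suc[OF L])
  then have decrements: "(\<lambda>n. (norm (x n - p))\<^sup>2 - (norm (x (Suc n) - p))\<^sup>2) \<longlonglongrightarrow> 0"
    by simp
  have "1 * descent n \<le> (norm (x n - p))\<^sup>2 - (norm (x (Suc n) - p))\<^sup>2" for n
    using x_Suc_dist_le[OF p, of n] by linarith
  then show ?thesis
    by (intro tendsto_zero_if_scaled_le[OF decrements zero_less_one] always_eventually allI
        descent_nonneg)
qed

lemma x_u_tendsto_zero: "(\<lambda>n. norm (x n - u n)) \<longlonglongrightarrow> 0"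
proof -
  have "a * b * (norm (x n - u n))\<^sup>2 \<le> descent n" for n
  proof -
    have "a * b \<le> \<alpha>s n * \<beta>s n"
      using alpha(2) beta_bounds(3)[of n] b(1) less_imp_le[OF alpha_bounds(1)[of n]]
      by (intro mult_mono) auto
    then have "a * b * (norm (x n - u n))\<^sup>2 \<le> \<alpha>s n * \<beta>s n * (norm (x n - u n))\<^sup>2"
      by (rule mult_right_mono) simp
    also have "\<dots> \<le> descent n"
      using alpha_bounds[of n] beta_bounds[of n] by (simp add: descent_def mult.assoc mult_left_mono)
    finally show ?thesis .
  qed
  then have "(\<lambda>n. (norm (x n - u n))\<^sup>2) \<longlonglongrightarrow> 0"
    using alpha(1) b(1) by (intro tendsto_zero_if_scaled_le[OF descent_tendsto_zero, of "a * b"]) auto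
  then show ?thesis
    by simp
qed

lemma x_Su_tendsto_zero: "(\<lambda>n. norm (x n - S (u n))) \<longlonglongrightarrow> 0"
proof -
  obtain k where k: "k > 0" "\<forall>\<^sub>F n in sequentially. \<beta>s n * (1 - \<beta>s n) > k"
    using beta_liminf by (rule liminf_pos_eventually_gt)
  have "a * k * (norm (x n - S (u n)))\<^sup>2 \<le> descent n" if "\<beta>s n * (1 - \<beta>s n) > k" for n
  proof -
    have "a * k \<le> \<alpha>s n * (\<beta>s n * (1 - \<beta>s n))"
      using alpha(2) that k(1) less_imp_le[OF alpha_bounds(1)[of n]] by (intro mult_mono) auto
    then have "a * k * (norm (x n - S (u n)))\<^sup>2 \<le> \<alpha>s n * (\<beta>s n * (1 - \<beta>s n)) * (norm (x n - S (u n)))\<^sup>2"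
      by (rule mult_right_mono) simp
    also have "\<dots> \<le> descent n"
      using alpha_bounds[of n] beta_bounds[of n] by (simp add: descent_def mult.assoc mult_left_mono)
    finally show ?thesis .
  qed
  then have "(\<lambda>n. (norm (x n - S (u n)))\<^sup>2) \<longlonglongrightarrow> 0"
    using alpha(1) k
    by (intro tendsto_zero_if_scaled_le[OF descent_tendsto_zero, of "a * k"]) (auto elim: eventually_mono)
  then show ?thesis
    by simp
qed

lemma u_Su_tendsto_zero: "(\<lambda>n. norm (u n - S (u n))) \<longlonglongrightarrow> 0"
proof (rule tendsto_0_le[where K = 1])
  show "(\<lambda>n. norm (x n - u n) + norm (x n - S (u n))) \<longlonglongrightarrow> 0"
    using tendsto_add[OF x_u_tendsto_zero x_Su_tendsto_zero] by simp
  have "norm (u n - S (u n)) \<le> norm (x n - u n) + norm (x n - S (u n))" for n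
    using norm_triangle_ineq4[of "x n - S (u n)" "x n - u n"] by (simp add: add.commute)
  then show "\<forall>\<^sub>F n in sequentially.
               norm (norm (u n - S (u n))) \<le> norm (norm (x n - u n) + norm (x n - S (u n))) * 1"
    by simp
qed

lemma Bseq_x: "Bseq x"
  using fejer_monotone_Bseq[OF fejer_monotone_x nonempty] .

lemma Bseq_u: "Bseq u"
proof -
  have "(\<lambda>n. u n - x n) \<longlonglongrightarrow> 0"
    using x_u_tendsto_zero by (simp add: tendsto_norm_zero_iff norm_minus_commute)
  then have "Bseq (\<lambda>n. x n + (u n - x n))"
    using Bseq_add_Bseq[OF Bseq_x convergent_imp_Bseq[OF convergentI]] by blast
  then show ?thesis
    by simp
qed

lemma bifun_u_eventually_le:
  assumes z: "z \<in> E" and e: "\<epsilon> > 0"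
  shows "\<forall>\<^sub>F n in sequentially. f z (u n) \<le> \<epsilon>"
proof -
  obtain M where M: "\<And>n. norm (u n) \<le> M"
    using Bseq_u by (meson BseqE)
  then have M_nonneg: "0 \<le> M"
    using norm_ge_zero order_trans by blast
  obtain r0 where r0: "r0 > 0" "\<forall>\<^sub>F n in sequentially. r n > r0"
    using r_liminf by (rule liminf_pos_eventually_gt)
  have "(\<lambda>n. (norm z + M) / r0 * norm (x n - u n)) \<longlonglongrightarrow> 0"
    by (intro tendsto_mult_right_zero x_u_tendsto_zero)
  then have "\<forall>\<^sub>F n in sequentially. (norm z + M) / r0 * norm (x n - u n) < \<epsilon>"
    using e by (simp add: order_tendstoD(2))
  with r0(2) show ?thesis
  proof eventually_elim
    case (elim n)
    have rn: "r n > 0"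
      using r_pos by blast
    have "f z (u n) \<le> (1 / r n) * ((z - u n) \<bullet> (u n - x n))"
      by (rule resolvent_bifun_le[OF f rn u_in_E u_resolvent z])
    also have "\<dots> \<le> (1 / r n) * (norm (z - u n) * norm (x n - u n))"
      using rn norm_cauchy_schwarz[of "z - u n" "u n - x n"]
      by (simp add: norm_minus_commute divide_right_mono)
    also have "\<dots> \<le> (1 / r0) * ((norm z + M) * norm (x n - u n))"
      using rn elim(1) r0(1) M[of n] M_nonneg norm_triangle_ineq4[of z "u n"]
      by (intro mult_mono) (auto simp: field_simps)
    also have "\<dots> < \<epsilon>"
      using elim(2) by simp
    finally show ?case
      by simp
  qed
qed

text \<open>Along a subsequence, \<open>u\<close> has the same asymptotic center as \<open>x\<close>; it is a fixed point since
  \<open>u n - S (u n) \<rightarrow> 0\<close>, and an equilibrium point since the sublevel sets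
  \<open>{w. f z w \<le> \<epsilon>}\<close> eventually contain \<open>u n\<close>.\<close>

lemma subseq_asymp_center_in_Sol:
  assumes \<sigma>: "strict_mono \<sigma>" and c: "asymp_center (x \<circ> \<sigma>) c"
  shows "c \<in> Sol"
proof -
  define t where "t = u \<circ> \<sigma>"
  have t: "Bseq t" "\<And>n. t n \<in> E"
    using Bseq_subseq[OF Bseq_u] u_in_E by (auto simp: t_def o_def)
  have "(\<lambda>n. norm ((x \<circ> \<sigma>) n - t n)) \<longlonglongrightarrow> 0"
    using LIMSEQ_subseq_LIMSEQ[OF x_u_tendsto_zero \<sigma>] by (simp add: o_def t_def)
  then have ct: "asymp_center t c"
    using c asymp_dist_sq_eq_if_close[OF _ t(1)] Bseq_subseq[OF Bseq_x]
    by (simp add: asymp_center_def o_def)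
  have cE: "c \<in> E"
    using asymp_center_in_closed_convex[OF t(1) ct E(2,3)] t(2) by simp
  have "(\<lambda>n. norm (t n - S (t n))) \<longlonglongrightarrow> 0"
    using LIMSEQ_subseq_LIMSEQ[OF u_Su_tendsto_zero \<sigma>] by (simp add: o_def t_def)
  then have "S c = c"
    by (rule hybrid_asymp_center_fixed[OF S t(2,1) ct cE])
  moreover have "f z c \<le> 0" if z: "z \<in> E" for z
  proof (rule field_le_epsilon)
    fix \<epsilon> :: real
    assume "0 < \<epsilon>"
    have "\<forall>\<^sub>F n in sequentially. t n \<in> {w\<in>E. f z w \<le> \<epsilon>}"
      using eventually_subseq[OF \<sigma> bifun_u_eventually_le[OF z \<open>0 < \<epsilon>\<close>]] t(2)
      by (auto simp: t_def elim: eventually_mono)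
    then have "c \<in> {w\<in>E. f z w \<le> \<epsilon>}"
      by (intro asymp_center_in_closed_convex[OF t(1) ct] closed_sublevel_lsc convex_sublevel
          E(2) bifun_conds_lsc[OF f z] bifun_conds_convex[OF f z])
    then show "f z c \<le> 0 + \<epsilon>"
      by simp
  qed
  ultimately show ?thesis
    using cE by (simp add: EP_eq_Minty[OF f E(3)] fixset_def)
qed

end

theorem theorem3p4:
  fixes E :: "'a::{real_inner, complete_space} set"
    and f :: "'a \<Rightarrow> 'a \<Rightarrow> real"
    and S :: "'a \<Rightarrow> 'a"
    and \<alpha>s \<beta>s r :: "nat \<Rightarrow> real"
    and a b :: real
    and x0 :: 'a
    and x u y :: "nat \<Rightarrow> 'a"
  assumes E: "E \<noteq> {}" "closed E" "convex E"
    and f: "bifun_conds E f"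
    and S: "hybrid E S"
    and nonempty: "fixset E S \<inter> EP E f \<noteq> {}"
    and alpha: "a > 0" "\<forall>n. a \<le> \<alpha>s n \<and> \<alpha>s n \<le> 1"
    and r_pos: "\<forall>n. r n > 0"
    and r_liminf: "liminf (\<lambda>n. ereal (r n)) > 0"
    and b: "0 < b" "b < 1"
    and beta: "\<forall>n. b \<le> \<beta>s n \<and> \<beta>s n \<le> 1"
    and beta_liminf: "liminf (\<lambda>n. ereal (\<beta>s n * (1 - \<beta>s n))) > 0"
    and x0: "x0 \<in> E" "x 0 = x0"
    and u: "\<forall>n. u n \<in> E \<and> (\<forall>z\<in>E. f (u n) z + (1 / r n) * ((z - u n) \<bullet> (u n - x n)) \<ge> 0)"
    and y: "\<forall>n. y n = (1 - \<beta>s n) *\<^sub>R x n + \<beta>s n *\<^sub>R S (u n)"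
    and x: "\<forall>n. x (Suc n) = (1 - \<alpha>s n) *\<^sub>R x n + \<alpha>s n *\<^sub>R S (y n)"
  shows "\<exists>v \<in> fixset E S \<inter> EP E f. weakly_conv x v \<and>
           ((\<lambda>n. metric_proj (fixset E S \<inter> EP E f) (x n)) \<longlonglongrightarrow> v)"
proof -
  interpret hybrid_ep_scheme E f S \<alpha>s \<beta>s r a b x0 x u y
    using assms by (simp add: hybrid_ep_scheme_def)
  have "\<exists>v\<in>Sol. weakly_conv x v"
    by (rule weakly_conv_if_subseq_centers_in[OF fejer_monotone_x nonempty])
       (rule subseq_asymp_center_in_Sol)
  then obtain v where v: "v \<in> Sol" "weakly_conv x v"
    by blast
  moreover have "(\<lambda>n. metric_proj Sol (x n)) \<longlonglongrightarrow> v"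
    by (rule metric_proj_fejer_tendsto[OF closed_Sol convex_Sol nonempty fejer_monotone_x v(2,1)])
  ultimately show ?thesis
    by blast
qed

end
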